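(* Let $\chi:\mathfrak{g}\to W_1^*\otimes\cdots\otimes W_n^*$ and $\varphi:\mathfrak{h}\to V_1^*\otimes\cdots\otimes V_m^*$ be factorization structures, and $T\subset\chi(\mathfrak{g})$, $S\subset\varphi(\mathfrak{h})$ 1-dimensional subspaces; consider the product $P=\varphi(\mathfrak{h})\otimes T+S\otimes\chi(\mathfrak{g})\subset V_1^*\otimes\cdots\otimes V_m^*\otimes W_1^*\otimes\cdots\otimes W_n^*$. Then for 1-dimensional subspaces $I\subset V_1^*\otimes\cdots\otimes V_m^*$ and $K\subset W_1^*\otimes\cdots\otimes W_n^*$ we have $I\otimes K\subset P$ if and only if either ($I=S$ and $K\subset\chi(\mathfrak{g})$) or ($K=T$ and $I\subset\varphi(\mathfrak{h})$).
   Context: All spaces are real or complex; $V_i,W_i$ are 2-dimensional. A factorization structure of dimension $m$ is an injective linear map $\varphi:\mathfrak{h}\to V_1^*\otimes\cdots\otimes V_m^*$ with $\dim\mathfrak{h}=m+1$ such that $\dim(\varphi(\mathfrak{h})\cap V_1^*\otimes\cdots\otimes\ell^0\otimes\cdots\otimes V_m^* )=1$ (with $\ell^0$, the annihilator of $\ell$, in the $j$-th slot) for every $j$ and all $\ell$ in a nonempty Zariski-open subset of $\mathbb{P}(V_j)$. The subspace $P$ is (the image of) the product factorization structure of $\varphi$ and $\chi$. *)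

theory Defs
  imports Complex_Main "HOL-Library.Function_Algebras"
begin

text \<open>Coordinates: each 2-dimensional space V_j (and its dual) is identified with
  functions bool => 'a. A tensor in the j-fold tensor product of such duals is a
  coefficient function on bool lists, supported on lists of length m.\<close>

definition tscale :: "'a::field \<Rightarrow> (bool list \<Rightarrow> 'a) \<Rightarrow> (bool list \<Rightarrow> 'a)" where
  "tscale c f = (\<lambda>l. c * f l)"

definition tspan :: "(bool list \<Rightarrow> 'a::field) set \<Rightarrow> (bool list \<Rightarrow> 'a) set" where
  "tspan X = module.span tscale X"

definition tsubspace :: "(bool list \<Rightarrow> 'a::field) set \<Rightarrow> bool" where
  "tsubspace X = module.subspace tscale X"

definition tdim :: "(bool list \<Rightarrow> 'a::field) set \<Rightarrow> nat" where
  "tdim X = vector_space.dim tscale X"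

definition ptens :: "(bool \<Rightarrow> 'a::field) list \<Rightarrow> bool list \<Rightarrow> 'a" where
  "ptens xs l = (if length l = length xs then (\<Prod>i<length xs. (xs ! i) (l ! i)) else 0)"

definition tspace :: "nat \<Rightarrow> (bool list \<Rightarrow> 'a::field) set" where
  "tspace m = tspan {ptens xs | xs. length xs = m}"

definition pairing :: "(bool \<Rightarrow> 'a::field) \<Rightarrow> (bool \<Rightarrow> 'a) \<Rightarrow> 'a" where
  "pairing \<xi> v = \<xi> True * v True + \<xi> False * v False"

definition annih :: "(bool \<Rightarrow> 'a::field) \<Rightarrow> (bool \<Rightarrow> 'a) set" where
  "annih v = {\<xi>. \<forall>c. pairing \<xi> (\<lambda>b. c * v b) = 0}"

text \<open>V_1^* \<otimes> ... \<otimes> \<ell>^0 \<otimes> ... \<otimes> V_m^*, \<ell>^0 in slot j (0-based).\<close>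
definition slot_space :: "nat \<Rightarrow> nat \<Rightarrow> (bool \<Rightarrow> 'a::field) \<Rightarrow> (bool list \<Rightarrow> 'a) set" where
  "slot_space m j v = tspan {ptens xs | xs. length xs = m \<and> xs ! j \<in> annih v}"

definition hom_eval :: "nat \<Rightarrow> (nat \<Rightarrow> 'a::field) \<Rightarrow> (bool \<Rightarrow> 'a) \<Rightarrow> 'a" where
  "hom_eval d c v = (\<Sum>k\<le>d. c k * v True ^ k * v False ^ (d - k))"

text \<open>Zariski-open subsets of P(V_j) = P^1, represented by the (scale-invariant) set of
  nonzero vectors representing their points: complement of the common zero locus of a
  family of homogeneous polynomials.\<close>
definition zariski_open_P1 :: "(bool \<Rightarrow> 'a::field) set \<Rightarrow> bool" where
  "zariski_open_P1 U \<longleftrightarrow> (\<exists>F. U = {v. v \<noteq> (\<lambda>_. 0) \<and> (\<exists>(d, c)\<in>F. hom_eval d c v \<noteq> 0)})"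

definition factorization_structure ::
  "('a::field \<Rightarrow> 'h::ab_group_add \<Rightarrow> 'h) \<Rightarrow> ('h \<Rightarrow> bool list \<Rightarrow> 'a) \<Rightarrow> nat \<Rightarrow> bool" where
  "factorization_structure sh \<phi> m \<longleftrightarrow>
     vector_space sh \<and> Vector_Spaces.linear sh tscale \<phi> \<and> inj \<phi> \<and>
     vector_space.dim sh UNIV = m + 1 \<and> range \<phi> \<subseteq> tspace m \<and>
     (\<forall>j<m. \<exists>U. zariski_open_P1 U \<and> U \<noteq> {} \<and>
        (\<forall>v\<in>U. tdim (range \<phi> \<inter> slot_space m j v) = 1))"

definition tprod :: "nat \<Rightarrow> (bool list \<Rightarrow> 'a::field) \<Rightarrow> (bool list \<Rightarrow> 'a) \<Rightarrow> bool list \<Rightarrow> 'a" where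
  "tprod m x y l = x (take m l) * y (drop m l)"

definition tens_sub :: "nat \<Rightarrow> (bool list \<Rightarrow> 'a::field) set \<Rightarrow> (bool list \<Rightarrow> 'a) set \<Rightarrow> (bool list \<Rightarrow> 'a) set" where
  "tens_sub m A B = tspan {tprod m x y | x y. x \<in> A \<and> y \<in> B}"

definition sum_sub :: "('b::plus) set \<Rightarrow> 'b set \<Rightarrow> 'b set" where
  "sum_sub A B = {a + b | a b. a \<in> A \<and> b \<in> B}"

definition is_line :: "(bool list \<Rightarrow> 'a::field) set \<Rightarrow> bool" where
  "is_line X \<longleftrightarrow> tsubspace X \<and> tdim X = 1"

end

theory Submission imports Defs begin

text \<open>Let \<open>a, b, s, t\<close> span \<open>I, K, S, T\<close>. Then \<open>I \<otimes> K \<subseteq> P\<close> means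
  \<open>a \<otimes> b = u \<otimes> t + s \<otimes> w\<close> with \<open>u \<in> \<phi>(h)\<close> and \<open>w \<in> \<chi>(g)\<close>. If \<open>u\<close> is proportional to
  \<open>s\<close>, the right-hand side is the pure tensor \<open>s \<otimes> (c t + w)\<close>, so \<open>a \<sim> s\<close> and \<open>b \<in> \<chi>(g)\<close>.
  Otherwise \<open>u\<close> and \<open>s\<close> are independent at two indices, and the resulting \<open>2\<times>2\<close> system shows
  that \<open>t\<close> and \<open>w\<close> are multiples of \<open>b\<close>, so \<open>b \<sim> t\<close> and \<open>a \<in> span {u, s} \<subseteq> \<phi>(h)\<close>.\<close>

lemma rank_one_left_factor_proportional:
  fixes a s :: "'p \<Rightarrow> 'a::field" and b v :: "'q \<Rightarrow> 'a"
  assumes eq: "\<And>p q. a p * b q = s p * v q" and "b \<noteq> 0"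
  shows "\<exists>k. a = (\<lambda>p. k * s p)"
proof -
  obtain q where "b q \<noteq> 0" using \<open>b \<noteq> 0\<close> by (auto simp: fun_eq_iff)
  then have "a = (\<lambda>p. v q / b q * s p)"
    using eq[of _ q] by (auto simp: fun_eq_iff field_simps)
  then show ?thesis by blast
qed

lemma rank_one_eq_sum_right_factors_proportional:
  fixes a u s :: "'p \<Rightarrow> 'a::field" and b t w :: "'q \<Rightarrow> 'a"
  assumes eq: "\<And>p q. a p * b q = u p * t q + s p * w q"
    and indep: "u p * s p' \<noteq> u p' * s p"
  shows "\<exists>\<alpha> \<beta>. t = (\<lambda>q. \<alpha> * b q) \<and> w = (\<lambda>q. \<beta> * b q)"
proof -
  define D where "D = u p * s p' - u p' * s p"
  have "D \<noteq> 0" using indep by (simp add: D_def)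
  have "(a p * s p' - a p' * s p) * b q = D * t q" for q
  proof -
    have "(a p * s p' - a p' * s p) * b q = s p' * (a p * b q) - s p * (a p' * b q)"
      by (simp add: algebra_simps)
    then show ?thesis by (simp add: eq D_def algebra_simps)
  qed
  moreover have "(a p' * u p - a p * u p') * b q = D * w q" for q
  proof -
    have "(a p' * u p - a p * u p') * b q = u p * (a p' * b q) - u p' * (a p * b q)"
      by (simp add: algebra_simps)
    then show ?thesis by (simp add: eq D_def algebra_simps)
  qed
  ultimately have "t = (\<lambda>q. (a p * s p' - a p' * s p) / D * b q)"
    and "w = (\<lambda>q. (a p' * u p - a p * u p') / D * b q)"
    using \<open>D \<noteq> 0\<close> by (auto simp: fun_eq_iff field_simps)
  then show ?thesis by blast
qed

lemma rank_one_eq_sum_cases: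
  fixes a u s :: "'p \<Rightarrow> 'a::field" and b t w :: "'q \<Rightarrow> 'a"
  assumes eq: "\<And>p q. a p * b q = u p * t q + s p * w q"
    and "a \<noteq> 0" "b \<noteq> 0" "s \<noteq> 0" "t \<noteq> 0"
  shows "(\<exists>k. a = (\<lambda>p. k * s p)) \<and> (\<exists>c d. b = (\<lambda>q. c * t q + d * w q))
    \<or> (\<exists>k. b = (\<lambda>q. k * t q)) \<and> (\<exists>c d. a = (\<lambda>p. c * u p + d * s p))"
proof (cases "\<forall>p p'. u p * s p' = u p' * s p")
  case True
  then obtain c where u: "u = (\<lambda>p. c * s p)"
    using rank_one_left_factor_proportional[where a = u and b = s and s = s and v = u] \<open>s \<noteq> 0\<close>
    by (auto simp: mult.commute)
  have eq': "a p * b q = s p * (c * t q + w q)" for p q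
    using eq[of p q] by (simp add: u algebra_simps)
  have "\<exists>k. a = (\<lambda>p. k * s p)"
    using rank_one_left_factor_proportional[OF eq' \<open>b \<noteq> 0\<close>] .
  moreover obtain k where "b = (\<lambda>q. k * (c * t q + w q))"
    using rank_one_left_factor_proportional[where a = b and b = a and v = s
        and s = "\<lambda>q. c * t q + w q"] eq' \<open>a \<noteq> 0\<close>
    by (auto simp: mult.commute)
  then have "b = (\<lambda>q. (k * c) * t q + k * w q)" by (simp add: algebra_simps)
  ultimately show ?thesis by blast
next
  case False
  then obtain p p' where "u p * s p' \<noteq> u p' * s p" by blast
  then obtain \<alpha> \<beta> where t: "t = (\<lambda>q. \<alpha> * b q)" and w: "w = (\<lambda>q. \<beta> * b q)"
    using rank_one_eq_sum_right_factors_proportional[of a b u t s w p p'] eq by blast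
  have "\<alpha> \<noteq> 0" using \<open>t \<noteq> 0\<close> by (auto simp: t fun_eq_iff)
  then have "b = (\<lambda>q. 1 / \<alpha> * t q)" by (simp add: t fun_eq_iff)
  moreover have "a p * b q = (\<alpha> * u p + \<beta> * s p) * b q" for p q
    using eq[of p q] by (simp add: t w algebra_simps)
  then obtain k where "a = (\<lambda>p. k * (\<alpha> * u p + \<beta> * s p))"
    using rank_one_left_factor_proportional[of a b "\<lambda>p. \<alpha> * u p + \<beta> * s p" b] \<open>b \<noteq> 0\<close>
    by blast
  then have "a = (\<lambda>p. (k * \<alpha>) * u p + (k * \<beta>) * s p)" by (simp add: algebra_simps)
  ultimately show ?thesis by blast
qed

interpretation tv: vector_space "tscale :: 'a::field \<Rightarrow> (bool list \<Rightarrow> 'a) \<Rightarrow> _"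
  by unfold_locales (auto simp: tscale_def fun_eq_iff algebra_simps)

lemma is_line_obtain_generator:
  assumes "is_line (X :: (bool list \<Rightarrow> 'a::field) set)"
  obtains a where "a \<noteq> 0" "X = tv.span {a}"
proof -
  from assms have "tv.subspace X" and "tv.dim X = 1"
    by (auto simp: is_line_def tsubspace_def tdim_def)
  obtain B where B: "B \<subseteq> X" "tv.independent B" "X \<subseteq> tv.span B" "card B = tv.dim X"
    by (rule tv.basis_exists)
  then obtain a where "B = {a}" using \<open>tv.dim X = 1\<close> by (auto simp: card_Suc_eq)
  then have "a \<noteq> 0" and "X = tv.span {a}"
    using B \<open>tv.subspace X\<close> tv.dependent_zero by (auto simp: tv.span_subspace)
  then show ?thesis using that by blast
qed

lemma span_singleton_scale_eq:
  assumes "a = tscale k s" "a \<noteq> 0"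
  shows "tv.span {a} = tv.span {s}"
proof -
  have "k \<noteq> 0" using assms by (auto simp: tscale_def fun_eq_iff)
  then have "s = tscale (1 / k) a" using assms(1) by (simp add: tscale_def fun_eq_iff)
  then have "s \<in> tv.span {a}" by (metis tv.span_scale tv.span_base singletonI)
  moreover have "a \<in> tv.span {s}" using assms(1) by (metis tv.span_scale tv.span_base singletonI)
  ultimately show ?thesis by (simp add: tv.span_eq)
qed

lemma subspace_range_linear:
  assumes "Vector_Spaces.linear sh tscale (\<phi> :: 'h::ab_group_add \<Rightarrow> bool list \<Rightarrow> 'a::field)"
  shows "tv.subspace (range \<phi>)"
proof -
  interpret module_hom sh tscale \<phi> using assms by (simp add: module_hom_iff_linear)
  show ?thesis by (rule subspace_image[OF m1.subspace_UNIV])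
qed

lemma tspace_vanishes_off_order: "x \<in> tspace m \<Longrightarrow> length p \<noteq> m \<Longrightarrow> x p = 0"
  unfolding tspace_def tspan_def
proof (induction rule: tv.span_induct)
  case base
  show ?case by (auto simp: tv.subspace_def tscale_def)
next
  case (step x)
  then show ?case by (auto simp: ptens_def)
qed

lemma linear_tprod_left: "Vector_Spaces.linear tscale tscale (\<lambda>x. tprod m x y)"
  by (auto simp: Vector_Spaces.linear_iff tprod_def tscale_def fun_eq_iff algebra_simps
      tv.vector_space_axioms)

lemma linear_tprod_right: "Vector_Spaces.linear tscale tscale (\<lambda>y. tprod m x y)"
  by (auto simp: Vector_Spaces.linear_iff tprod_def tscale_def fun_eq_iff algebra_simps
      tv.vector_space_axioms)

lemma subspace_linear_image:
  assumes "Vector_Spaces.linear tscale tscale f" "tv.subspace R"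
  shows "tv.subspace (f ` (R :: (bool list \<Rightarrow> 'a::field) set))"
proof -
  interpret module_hom tscale tscale f using assms(1) by (simp add: module_hom_iff_linear)
  show ?thesis by (rule subspace_image[OF assms(2)])
qed

lemma tens_sub_span_right:
  assumes "tv.subspace R"
  shows "tens_sub m R (tv.span {t}) \<subseteq> (\<lambda>u. tprod m u t) ` R"
  unfolding tens_sub_def tspan_def
proof (rule tv.span_minimal)
  have "tprod m x (tscale c t) = tprod m (tscale c x) t" for x c
    by (simp add: tprod_def tscale_def fun_eq_iff)
  then show "{tprod m x y |x y. x \<in> R \<and> y \<in> tv.span {t}} \<subseteq> (\<lambda>u. tprod m u t) ` R"
    using assms by (auto simp: tv.span_singleton tv.subspace_scale)
  show "tv.subspace ((\<lambda>u. tprod m u t) ` R)"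
    by (rule subspace_linear_image[OF linear_tprod_left assms])
qed

lemma tens_sub_span_left:
  assumes "tv.subspace R"
  shows "tens_sub m (tv.span {s}) R \<subseteq> (\<lambda>w. tprod m s w) ` R"
  unfolding tens_sub_def tspan_def
proof (rule tv.span_minimal)
  have "tprod m (tscale c s) y = tprod m s (tscale c y)" for y c
    by (simp add: tprod_def tscale_def fun_eq_iff)
  then show "{tprod m x y |x y. x \<in> tv.span {s} \<and> y \<in> R} \<subseteq> (\<lambda>w. tprod m s w) ` R"
    using assms by (auto simp: tv.span_singleton tv.subspace_scale)
  show "tv.subspace ((\<lambda>w. tprod m s w) ` R)"
    by (rule subspace_linear_image[OF linear_tprod_right assms])
qed

lemma tprod_mem_tens_sub: "x \<in> A \<Longrightarrow> y \<in> B \<Longrightarrow> tprod m x y \<in> tens_sub m A B"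
  unfolding tens_sub_def tspan_def by (rule tv.span_base) blast

lemma tens_sub_mono: "A \<subseteq> A' \<Longrightarrow> B \<subseteq> B' \<Longrightarrow> tens_sub m A B \<subseteq> tens_sub m A' B'"
  unfolding tens_sub_def tspan_def by (rule tv.span_mono) blast

lemma zero_mem_tens_sub: "0 \<in> tens_sub m A B"
  unfolding tens_sub_def tspan_def by (rule tv.span_zero)

lemma subset_sum_sub_left: "0 \<in> B \<Longrightarrow> A \<subseteq> sum_sub A (B :: 'b::monoid_add set)"
  unfolding sum_sub_def by force

lemma subset_sum_sub_right: "0 \<in> A \<Longrightarrow> B \<subseteq> sum_sub A (B :: 'b::monoid_add set)"
  unfolding sum_sub_def by force

lemma tprod_mem_sum_sub_cases:
  assumes R: "tv.subspace R" "R \<subseteq> tspace m" and Q: "tv.subspace Q"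
    and s: "s \<in> R" "s \<noteq> 0" and t: "t \<in> Q" "t \<noteq> 0"
    and a: "a \<in> tspace m" "a \<noteq> 0" and "b \<noteq> 0"
    and mem: "tprod m a b \<in> sum_sub (tens_sub m R (tv.span {t})) (tens_sub m (tv.span {s}) Q)"
  shows "(tv.span {a} = tv.span {s} \<and> b \<in> Q) \<or> (tv.span {b} = tv.span {t} \<and> a \<in> R)"
proof -
  obtain u w where "u \<in> R" "w \<in> Q" and ab: "tprod m a b = tprod m u t + tprod m s w"
    using mem tens_sub_span_right[OF R(1)] tens_sub_span_left[OF Q] unfolding sum_sub_def by blast
  have eq: "a p * b q = u p * t q + s p * w q" for p q
  proof (cases "length p = m")
    case True
    then show ?thesis using fun_cong[OF ab, of "p @ q"] by (simp add: tprod_def)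
  next
    case False
    then show ?thesis
      using tspace_vanishes_off_order \<open>u \<in> R\<close> s(1) a(1) R(2) by (metis subsetD mult_zero_left add_0)
  qed
  from rank_one_eq_sum_cases[OF eq a(2) \<open>b \<noteq> 0\<close> s(2) t(2)] show ?thesis
  proof (elim disjE conjE exE)
    fix k c d assume "a = (\<lambda>p. k * s p)" and "b = (\<lambda>q. c * t q + d * w q)"
    then have "a = tscale k s" and b: "b = tscale c t + tscale d w"
      by (simp_all add: tscale_def fun_eq_iff)
    have "b \<in> Q" unfolding b using t(1) \<open>w \<in> Q\<close> Q by (simp add: tv.subspace_add tv.subspace_scale)
    then show ?thesis using span_singleton_scale_eq[OF \<open>a = tscale k s\<close> a(2)] by blast
  next
    fix k c d assume "b = (\<lambda>q. k * t q)" and "a = (\<lambda>p. c * u p + d * s p)"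
    then have "b = tscale k t" and a: "a = tscale c u + tscale d s"
      by (simp_all add: tscale_def fun_eq_iff)
    have "a \<in> R" unfolding a using s(1) \<open>u \<in> R\<close> R(1) by (simp add: tv.subspace_add tv.subspace_scale)
    then show ?thesis using span_singleton_scale_eq[OF \<open>b = tscale k t\<close> \<open>b \<noteq> 0\<close>] by blast
  qed
qed

lemma tens_sub_lines_subset_sum_sub_iff:
  assumes R: "tv.subspace R" "R \<subseteq> tspace m" and Q: "tv.subspace Q"
    and s: "s \<in> R" "s \<noteq> 0" and t: "t \<in> Q" "t \<noteq> 0"
    and a: "a \<in> tspace m" "a \<noteq> 0" and "b \<noteq> 0"
  shows "tens_sub m (tv.span {a}) (tv.span {b})
      \<subseteq> sum_sub (tens_sub m R (tv.span {t})) (tens_sub m (tv.span {s}) Q)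
    \<longleftrightarrow> (tv.span {a} = tv.span {s} \<and> tv.span {b} \<subseteq> Q)
      \<or> (tv.span {b} = tv.span {t} \<and> tv.span {a} \<subseteq> R)"
proof
  assume "tens_sub m (tv.span {a}) (tv.span {b})
      \<subseteq> sum_sub (tens_sub m R (tv.span {t})) (tens_sub m (tv.span {s}) Q)"
  moreover have "tprod m a b \<in> tens_sub m (tv.span {a}) (tv.span {b})"
    by (intro tprod_mem_tens_sub tv.span_base) simp_all
  ultimately have "(tv.span {a} = tv.span {s} \<and> b \<in> Q) \<or> (tv.span {b} = tv.span {t} \<and> a \<in> R)"
    using tprod_mem_sum_sub_cases[OF assms] by blast
  moreover have "b \<in> Q \<Longrightarrow> tv.span {b} \<subseteq> Q" "a \<in> R \<Longrightarrow> tv.span {a} \<subseteq> R"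
    using R(1) Q by (simp_all add: tv.span_minimal)
  ultimately show "(tv.span {a} = tv.span {s} \<and> tv.span {b} \<subseteq> Q)
      \<or> (tv.span {b} = tv.span {t} \<and> tv.span {a} \<subseteq> R)"
    by blast
next
  assume "(tv.span {a} = tv.span {s} \<and> tv.span {b} \<subseteq> Q)
      \<or> (tv.span {b} = tv.span {t} \<and> tv.span {a} \<subseteq> R)"
  then have "tens_sub m (tv.span {a}) (tv.span {b}) \<subseteq> tens_sub m (tv.span {s}) Q
      \<or> tens_sub m (tv.span {a}) (tv.span {b}) \<subseteq> tens_sub m R (tv.span {t})"
    using tens_sub_mono by (metis order_refl)
  then show "tens_sub m (tv.span {a}) (tv.span {b})
      \<subseteq> sum_sub (tens_sub m R (tv.span {t})) (tens_sub m (tv.span {s}) Q)"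
    using subset_sum_sub_left[OF zero_mem_tens_sub] subset_sum_sub_right[OF zero_mem_tens_sub]
    by blast
qed

theorem lemma1p11:
  fixes sh :: "'a::real_normed_field \<Rightarrow> 'h::ab_group_add \<Rightarrow> 'h"
    and \<phi> :: "'h \<Rightarrow> bool list \<Rightarrow> 'a"
    and sg :: "'a \<Rightarrow> 'g::ab_group_add \<Rightarrow> 'g"
    and \<chi> :: "'g \<Rightarrow> bool list \<Rightarrow> 'a"
    and m n :: nat
    and S T I K :: "(bool list \<Rightarrow> 'a) set"
  assumes "factorization_structure sg \<chi> n"
    and "factorization_structure sh \<phi> m"
    and "is_line T" and "T \<subseteq> range \<chi>"
    and "is_line S" and "S \<subseteq> range \<phi>"
    and "is_line I" and "I \<subseteq> tspace m"
    and "is_line K" and "K \<subseteq> tspace n"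
  shows "tens_sub m I K \<subseteq> sum_sub (tens_sub m (range \<phi>) T) (tens_sub m S (range \<chi>))
    \<longleftrightarrow> (I = S \<and> K \<subseteq> range \<chi>) \<or> (K = T \<and> I \<subseteq> range \<phi>)"
proof -
  obtain a where "a \<noteq> 0" and I: "I = tv.span {a}" using assms(7) by (rule is_line_obtain_generator)
  obtain b where "b \<noteq> 0" and K: "K = tv.span {b}" using assms(9) by (rule is_line_obtain_generator)
  obtain s where "s \<noteq> 0" and S: "S = tv.span {s}" using assms(5) by (rule is_line_obtain_generator)
  obtain t where "t \<noteq> 0" and T: "T = tv.span {t}" using assms(3) by (rule is_line_obtain_generator)
  have sub: "tv.subspace (range \<phi>)" "range \<phi> \<subseteq> tspace m" "tv.subspace (range \<chi>)"
    using assms(1,2) by (auto simp: factorization_structure_def subspace_range_linear)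
  have "a \<in> tspace m" "s \<in> range \<phi>" "t \<in> range \<chi>"
    using I S T assms(4,6,8) by (auto intro: tv.span_base)
  from tens_sub_lines_subset_sum_sub_iff[OF sub \<open>s \<in> range \<phi>\<close> \<open>s \<noteq> 0\<close> \<open>t \<in> range \<chi>\<close>
      \<open>t \<noteq> 0\<close> \<open>a \<in> tspace m\<close> \<open>a \<noteq> 0\<close> \<open>b \<noteq> 0\<close>]
  show ?thesis unfolding I K S T .
qed

end
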